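(* Every (fork, banner)-free graph $G$ satisfies $\chi(G)\le\omega(G)^2$.
   Context: All graphs are finite and simple; $\chi$ is chromatic number, $\omega$ clique number. The fork is obtained from $K_{1,3}$ by subdividing one edge once. The banner is a $4$-cycle with one pendant vertex attached. $G$ is $(H_1,H_2)$-free if it has no induced subgraph isomorphic to $H_1$ or $H_2$. *)

theory Defs
  imports Main
begin

definition simple_graph :: "'a set \<Rightarrow> ('a \<Rightarrow> 'a \<Rightarrow> bool) \<Rightarrow> bool" where
  "simple_graph V E \<longleftrightarrow> finite V \<and> (\<forall>x\<in>V. \<forall>y\<in>V. E x y \<longleftrightarrow> E y x) \<and> (\<forall>x\<in>V. \<not> E x x)"

definition induced_subgraph_iso ::
  "'b set \<Rightarrow> ('b \<Rightarrow> 'b \<Rightarrow> bool) \<Rightarrow> 'a set \<Rightarrow> ('a \<Rightarrow> 'a \<Rightarrow> bool) \<Rightarrow> bool" where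
  "induced_subgraph_iso VH EH V E \<longleftrightarrow>
     (\<exists>f. inj_on f VH \<and> f ` VH \<subseteq> V \<and>
          (\<forall>x\<in>VH. \<forall>y\<in>VH. E (f x) (f y) \<longleftrightarrow> EH x y))"

definition H_free :: "'b set \<Rightarrow> ('b \<Rightarrow> 'b \<Rightarrow> bool) \<Rightarrow> 'a set \<Rightarrow> ('a \<Rightarrow> 'a \<Rightarrow> bool) \<Rightarrow> bool" where
  "H_free VH EH V E \<longleftrightarrow> \<not> induced_subgraph_iso VH EH V E"

text \<open>Fork: K_{1,3} with centre 0 and leaves 1,2,3, edge 0-3 subdivided by vertex 4.\<close>

definition fork_edges :: "nat \<Rightarrow> nat \<Rightarrow> bool" where
  "fork_edges x y \<longleftrightarrow> {x, y} \<in> {{0,1}, {0,2}, {0,4}, {4,3}}"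

text \<open>Banner: 4-cycle 0-1-2-3-0 with pendant vertex 4 attached to 0.\<close>

definition banner_edges :: "nat \<Rightarrow> nat \<Rightarrow> bool" where
  "banner_edges x y \<longleftrightarrow> {x, y} \<in> {{0,1}, {1,2}, {2,3}, {3,0}, {0,4}}"

definition small_vertices :: "nat set" where
  "small_vertices = {0..4}"

definition proper_colouring :: "'a set \<Rightarrow> ('a \<Rightarrow> 'a \<Rightarrow> bool) \<Rightarrow> nat \<Rightarrow> ('a \<Rightarrow> nat) \<Rightarrow> bool" where
  "proper_colouring V E k c \<longleftrightarrow>
     (\<forall>x\<in>V. c x < k) \<and> (\<forall>x\<in>V. \<forall>y\<in>V. E x y \<longrightarrow> c x \<noteq> c y)"

definition chromatic_number :: "'a set \<Rightarrow> ('a \<Rightarrow> 'a \<Rightarrow> bool) \<Rightarrow> nat" where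
  "chromatic_number V E = (LEAST k. \<exists>c. proper_colouring V E k c)"

definition is_clique :: "'a set \<Rightarrow> ('a \<Rightarrow> 'a \<Rightarrow> bool) \<Rightarrow> 'a set \<Rightarrow> bool" where
  "is_clique V E K \<longleftrightarrow> K \<subseteq> V \<and> (\<forall>x\<in>K. \<forall>y\<in>K. x \<noteq> y \<longrightarrow> E x y)"

definition clique_number :: "'a set \<Rightarrow> ('a \<Rightarrow> 'a \<Rightarrow> bool) \<Rightarrow> nat" where
  "clique_number V E = Max (card ` {K. is_clique V E K})"

end

theory Submission
  imports Defs
begin

text \<open>Induction on induced subgraphs \<open>W\<close>. A vertex of degree below \<open>\<omega>(W)\<^sup>2\<close> can be coloured
  last; a disconnected \<open>W\<close> is coloured componentwise; if the complement of \<open>W\<close> is disconnected,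
  \<open>W\<close> is a join \<open>A + B\<close> with \<open>\<omega>(A) + \<omega>(B) \<le> \<omega>(W)\<close>, and \<open>\<omega>(A)\<^sup>2 + \<omega>(B)\<^sup>2 \<le> \<omega>(W)\<^sup>2\<close> colours
  suffice. It remains to rule out a connected, co-connected \<open>W\<close> of minimum degree at least
  \<open>\<omega>(W)\<^sup>2\<close>. As \<open>R(3, \<omega>) \<le> \<omega>\<^sup>2\<close>, some neighbourhood contains an independent triple; let \<open>S\<close> be a
  largest independent set with a common neighbour. Forks and banners force every vertex with
  both a neighbour and a non-neighbour in \<open>S\<close> to be adjacent to all common neighbours \<open>C\<close> of \<open>S\<close>,
  and maximality of \<open>S\<close> makes \<open>C\<close> anticomplete to the set \<open>R\<close> of vertices outside \<open>S\<close> without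
  neighbours in \<open>S\<close>. If \<open>R = {}\<close>, then \<open>C\<close> is complete to the rest of \<open>W\<close>. Otherwise, by
  connectivity some \<open>r \<in> R\<close> has a neighbour outside \<open>R\<close>, and forks and banners then force the
  neighbourhood of \<open>r\<close> to be a clique, so \<open>r\<close> has degree less than \<open>\<omega>(W)\<close>.\<close>

lemma card_ge_3_avoid_two:
  assumes "finite S" "3 \<le> card S"
  obtains s where "s \<in> S" "s \<noteq> a" "s \<noteq> b"
proof -
  have "card {a, b} \<le> 2"
    by (simp add: card_insert_if)
  then have "\<not> S \<subseteq> {a, b}"
    using assms card_mono[of "{a, b}" S] by auto
  then show ?thesis
    using that by blast
qed

lemma superadditive_mono:
  fixes f :: "nat \<Rightarrow> nat"
  assumes "\<And>a b. f a + f b \<le> f (a + b)" "m \<le> n"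
  shows "f m \<le> f n"
  using assms(1)[of m "n - m"] assms(2) by simp

lemma five_vertex_induced_subgraph:
  assumes "distinct xs" "length xs = 5" "set xs \<subseteq> V"
    and "\<forall>i\<in>small_vertices. \<forall>j\<in>small_vertices. E (xs ! i) (xs ! j) \<longleftrightarrow> H i j"
  shows "induced_subgraph_iso small_vertices H V E"
  unfolding induced_subgraph_iso_def
proof (intro exI conjI)
  show "inj_on (nth xs) small_vertices"
    using assms(1,2) by (intro inj_on_nth) (auto simp: small_vertices_def)
  show "nth xs ` small_vertices \<subseteq> V"
    using assms(2,3) nth_mem by (fastforce simp: small_vertices_def)
qed (use assms(4) in blast)

lemma small_vertices_eq: "small_vertices = {0, 1, 2, 3, 4}"
  by (auto simp: small_vertices_def)

lemma finite_cliques: "finite W \<Longrightarrow> finite {K. is_clique W E K}"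
  by (rule finite_subset[of _ "Pow W"]) (auto simp: is_clique_def)

lemma card_clique_le_clique_number:
  "finite W \<Longrightarrow> is_clique W E K \<Longrightarrow> card K \<le> clique_number W E"
  unfolding clique_number_def by (auto intro!: Max_ge finite_cliques)

lemma clique_number_attained:
  assumes "finite W"
  obtains K where "is_clique W E K" "card K = clique_number W E"
proof -
  have "{} \<in> {K. is_clique W E K}"
    by (simp add: is_clique_def)
  then have "clique_number W E \<in> card ` {K. is_clique W E K}"
    unfolding clique_number_def using finite_cliques[OF assms] by (intro Max_in) auto
  then show ?thesis
    using that by auto
qed

lemma clique_number_mono:
  assumes "W \<subseteq> W'" "finite W'"
  shows "clique_number W E \<le> clique_number W' E"
proof -
  obtain K where K: "is_clique W E K" "card K = clique_number W E"
    using clique_number_attained[of W E] finite_subset[OF assms] by blast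
  moreover have "is_clique W' E K"
    using K(1) assms(1) by (auto simp: is_clique_def)
  ultimately show ?thesis
    using card_clique_le_clique_number[OF assms(2)] by fastforce
qed

lemma proper_colouring_mono:
  "proper_colouring W E k c \<Longrightarrow> k \<le> k' \<Longrightarrow> proper_colouring W E k' c"
  unfolding proper_colouring_def by auto

lemma proper_colouring_shifted_union:
  assumes "proper_colouring A E ka ca" "proper_colouring B E kb cb"
  shows "proper_colouring (A \<union> B) E (ka + kb) (\<lambda>x. if x \<in> A then ca x else ka + cb x)"
  using assms unfolding proper_colouring_def
  by (auto simp: trans_less_add1)

lemma chromatic_number_le: "proper_colouring V E k c \<Longrightarrow> chromatic_number V E \<le> k"
  unfolding chromatic_number_def by (blast intro: Least_le)

text \<open>\<^term>\<open>proper_cut W (\<lambda>x y. \<not> E x y)\<close> says that \<open>W\<close> induces a disconnected graph,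
  \<^term>\<open>proper_cut W E\<close> that the complement of this graph is disconnected.\<close>

definition proper_cut :: "'a set \<Rightarrow> ('a \<Rightarrow> 'a \<Rightarrow> bool) \<Rightarrow> bool" where
  "proper_cut W R \<longleftrightarrow> (\<exists>A. A \<subseteq> W \<and> A \<noteq> {} \<and> A \<noteq> W \<and> (\<forall>x\<in>A. \<forall>y\<in>W - A. R x y))"

locale sgraph =
  fixes V :: "'a set" and E :: "'a \<Rightarrow> 'a \<Rightarrow> bool"
  assumes finite_V: "finite V"
    and adj_sym: "\<And>x y. x \<in> V \<Longrightarrow> y \<in> V \<Longrightarrow> E x y \<longleftrightarrow> E y x"
    and adj_irrefl: "\<And>x. x \<in> V \<Longrightarrow> \<not> E x x"
begin

abbreviation \<omega> :: "'a set \<Rightarrow> nat" where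
  "\<omega> W \<equiv> clique_number W E"

definition nbhd :: "'a set \<Rightarrow> 'a \<Rightarrow> 'a set" where
  "nbhd W v = {y \<in> W. E v y}"

lemma finite_subset_V: "W \<subseteq> V \<Longrightarrow> finite W"
  using finite_V finite_subset by blast

lemma clique_number_pos:
  assumes "W \<subseteq> V" "v \<in> W"
  shows "1 \<le> \<omega> W"
proof -
  have "is_clique W E {v}"
    using assms(2) by (simp add: is_clique_def)
  then show ?thesis
    using card_clique_le_clique_number finite_subset_V[OF assms(1)] by fastforce
qed

lemma card_no_independent_triple:
  assumes "X \<subseteq> V"
    and "\<forall>x\<in>X. \<forall>y\<in>X. \<forall>z\<in>X. x \<noteq> y \<longrightarrow> y \<noteq> z \<longrightarrow> x \<noteq> z \<longrightarrow> E x y \<or> E y z \<or> E x z"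
    and "\<And>K. is_clique X E K \<Longrightarrow> card K \<le> k"
  shows "card X < (Suc k)\<^sup>2"
  using assms
proof (induction k arbitrary: X)
  case 0
  have "X = {}"
  proof (rule ccontr)
    assume "X \<noteq> {}"
    then obtain u where "u \<in> X" by blast
    then have "is_clique X E {u}" by (simp add: is_clique_def)
    then show False using "0.prems"(3) by fastforce
  qed
  then show ?case by simp
next
  case (Suc k)
  show ?case
  proof (cases "X = {}")
    case False
    then obtain u where u: "u \<in> X" by blast
    have finX: "finite X" using Suc.prems(1) finite_subset_V by blast
    define Y where "Y = nbhd X u"
    define Z where "Z = X - insert u Y"
    have "card Y < (Suc k)\<^sup>2"
    proof (rule Suc.IH)
      show "Y \<subseteq> V" "\<forall>x\<in>Y. \<forall>y\<in>Y. \<forall>z\<in>Y. x \<noteq> y \<longrightarrow> y \<noteq> z \<longrightarrow> x \<noteq> z \<longrightarrow> E x y \<or> E y z \<or> E x z"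
        using Suc.prems(1,2) by (auto simp: Y_def nbhd_def)
    next
      fix K assume K: "is_clique Y E K"
      then have "is_clique X E (insert u K)" and "u \<notin> K"
        using u Suc.prems(1) adj_sym adj_irrefl
        by (auto simp: is_clique_def Y_def nbhd_def subset_iff)
      moreover have "finite K"
        using K finX by (auto simp: is_clique_def Y_def nbhd_def intro: finite_subset)
      ultimately show "card K \<le> k"
        using Suc.prems(3) by fastforce
    qed
    moreover have "card Z \<le> Suc k"
    proof (rule Suc.prems(3))
      show "is_clique X E Z"
        unfolding is_clique_def
      proof (intro conjI ballI impI)
        fix x y assume "x \<in> Z" "y \<in> Z" "x \<noteq> y"
        then show "E x y"
          using Suc.prems(2)[rule_format, of u x y] u by (auto simp: Z_def Y_def nbhd_def)
      qed (auto simp: Z_def)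
    qed
    moreover have "card X \<le> Suc (card Y + card Z)"
    proof -
      have "X \<subseteq> insert u (Y \<union> Z)" by (auto simp: Y_def Z_def nbhd_def)
      then have "card X \<le> card (insert u (Y \<union> Z))"
        using finX by (intro card_mono) (auto simp: Y_def Z_def nbhd_def)
      also have "\<dots> \<le> Suc (card (Y \<union> Z))"
        by (simp add: card_insert_le_m1)
      also have "\<dots> \<le> Suc (card Y + card Z)"
        by (simp add: card_Un_le)
      finally show ?thesis .
    qed
    ultimately show ?thesis
      by (simp add: power2_eq_square)
  qed simp
qed

lemma independent_triple_in_dense_nbhd:
  assumes "W \<subseteq> V" "v \<in> W" "(\<omega> W)\<^sup>2 \<le> card (nbhd W v)"
  obtains x y z where "{x, y, z} \<subseteq> nbhd W v" "x \<noteq> y" "y \<noteq> z" "x \<noteq> z"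
    "\<not> E x y" "\<not> E y z" "\<not> E x z"
proof -
  let ?N = "nbhd W v"
  have "\<not> card ?N < (Suc (\<omega> W - 1))\<^sup>2"
    using assms clique_number_pos[OF assms(1,2)] by simp
  moreover have "\<And>K. is_clique ?N E K \<Longrightarrow> card K \<le> \<omega> W - 1"
  proof -
    fix K assume K: "is_clique ?N E K"
    then have "is_clique W E (insert v K)" and "v \<notin> K"
      using assms(1,2) adj_sym adj_irrefl by (auto simp: is_clique_def nbhd_def subset_iff)
    moreover have "finite K"
      using K finite_subset_V[OF assms(1)]
      by (auto simp: is_clique_def nbhd_def intro: finite_subset)
    ultimately show "card K \<le> \<omega> W - 1"
      using card_clique_le_clique_number finite_subset_V[OF assms(1)] by fastforce
  qed
  moreover have "?N \<subseteq> V"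
    using assms(1) by (auto simp: nbhd_def)
  ultimately have "\<not> (\<forall>x\<in>?N. \<forall>y\<in>?N. \<forall>z\<in>?N. x \<noteq> y \<longrightarrow> y \<noteq> z \<longrightarrow> x \<noteq> z \<longrightarrow> E x y \<or> E y z \<or> E x z)"
    using card_no_independent_triple[of ?N "\<omega> W - 1"] by blast
  then show ?thesis
    using that by blast
qed

lemma colouring_extend_low_degree:
  assumes "W \<subseteq> V" "v \<in> W" "proper_colouring (W - {v}) E k c" "card (nbhd W v) < k"
  obtains c' where "proper_colouring W E k c'"
proof -
  have "\<not> {..<k} \<subseteq> c ` nbhd W v"
  proof
    assume "{..<k} \<subseteq> c ` nbhd W v"
    then have "k \<le> card (c ` nbhd W v)"
      using finite_subset_V[OF assms(1)] card_mono[of "c ` nbhd W v" "{..<k}"]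
      by (auto simp: nbhd_def)
    also have "\<dots> \<le> card (nbhd W v)"
      by (rule card_image_le) (use finite_subset_V[OF assms(1)] in \<open>simp add: nbhd_def\<close>)
    finally show False
      using assms(4) by simp
  qed
  then obtain j where j: "j < k" "j \<notin> c ` nbhd W v"
    by auto
  have "proper_colouring W E k (c(v := j))"
    unfolding proper_colouring_def
  proof (intro conjI ballI impI)
    fix x y assume xy: "x \<in> W" "y \<in> W" "E x y"
    then have "x = v \<Longrightarrow> y \<in> nbhd W v" "y = v \<Longrightarrow> x \<in> nbhd W v" "x \<noteq> v \<or> y \<noteq> v"
      using assms(1,2) adj_sym adj_irrefl by (auto simp: nbhd_def subset_iff)
    then show "(c(v := j)) x \<noteq> (c(v := j)) y"
      using j assms(3) xy unfolding proper_colouring_def by (auto simp: image_iff)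
  qed (use j assms(3) in \<open>auto simp: proper_colouring_def\<close>)
  then show ?thesis
    using that by blast
qed

lemma colouring_anticomplete_union:
  assumes "W \<subseteq> V" "\<forall>x\<in>A. \<forall>y\<in>W - A. \<not> E x y"
    and "proper_colouring A E k ca" "proper_colouring (W - A) E k cb"
  shows "proper_colouring W E k (\<lambda>x. if x \<in> A then ca x else cb x)"
  unfolding proper_colouring_def
proof (intro conjI ballI impI)
  fix x y assume xy: "x \<in> W" "y \<in> W" "E x y"
  then have "x \<in> A \<longleftrightarrow> y \<in> A"
    using assms(1,2) adj_sym by blast
  then show "(if x \<in> A then ca x else cb x) \<noteq> (if y \<in> A then ca y else cb y)"
    using xy assms(3,4) by (auto simp: proper_colouring_def)
qed (use assms(3,4) in \<open>auto simp: proper_colouring_def\<close>)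

lemma clique_number_join:
  assumes "W \<subseteq> V" "A \<subseteq> W" "\<forall>x\<in>A. \<forall>y\<in>W - A. E x y"
  shows "\<omega> A + \<omega> (W - A) \<le> \<omega> W"
proof -
  have fin: "finite A" "finite (W - A)"
    using assms(1,2) finite_subset_V by auto
  obtain KA where KA: "is_clique A E KA" "card KA = \<omega> A"
    using clique_number_attained[OF fin(1)] by blast
  obtain KB where KB: "is_clique (W - A) E KB" "card KB = \<omega> (W - A)"
    using clique_number_attained[OF fin(2)] by blast
  have "is_clique W E (KA \<union> KB)"
    using KA(1) KB(1) assms adj_sym unfolding is_clique_def by (smt (verit) Diff_iff UnE subset_iff)
  then have "card (KA \<union> KB) \<le> \<omega> W"
    using card_clique_le_clique_number finite_subset_V[OF assms(1)] by blast
  moreover have "card (KA \<union> KB) = card KA + card KB"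
    using KA(1) KB(1) fin
    by (intro card_Un_disjoint) (auto simp: is_clique_def intro: finite_subset)
  ultimately show ?thesis
    using KA(2) KB(2) by simp
qed

lemma colouring_from_superadditive_bound:
  fixes f :: "nat \<Rightarrow> nat"
  assumes superadditive: "\<And>a b. f a + f b \<le> f (a + b)"
    and no_critical: "\<And>W. W \<subseteq> V \<Longrightarrow> W \<noteq> {} \<Longrightarrow> \<forall>v\<in>W. f (\<omega> W) \<le> card (nbhd W v) \<Longrightarrow>
           \<not> proper_cut W (\<lambda>x y. \<not> E x y) \<Longrightarrow> \<not> proper_cut W E \<Longrightarrow> False"
    and "W \<subseteq> V"
  shows "\<exists>c. proper_colouring W E (f (\<omega> W)) c"
  using \<open>W \<subseteq> V\<close>
proof (induction "card W" arbitrary: W rule: less_induct)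
  case less
  have IH: "\<exists>c. proper_colouring W' E (f (\<omega> W')) c" if "W' \<subset> W" for W'
  proof (rule less.hyps)
    show "card W' < card W"
      using that finite_subset_V[OF less.prems] by (rule psubset_card_mono[rotated])
    show "W' \<subseteq> V"
      using that less.prems by blast
  qed
  have IH_mono: "\<exists>c. proper_colouring W' E (f (\<omega> W)) c" if "W' \<subset> W" for W'
  proof -
    have "\<omega> W' \<le> \<omega> W"
      using that less.prems by (intro clique_number_mono finite_subset_V) auto
    then have "f (\<omega> W') \<le> f (\<omega> W)"
      by (rule superadditive_mono[OF superadditive])
    then show ?thesis
      using IH[OF that] proper_colouring_mono by blast
  qed
  consider "W = {}" | v where "v \<in> W" "card (nbhd W v) < f (\<omega> W)"
    | "proper_cut W (\<lambda>x y. \<not> E x y)" | "proper_cut W E"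
    using no_critical[OF less.prems] by (meson not_le)
  then show ?case
  proof cases
    case 1
    then have "proper_colouring W E (f (\<omega> W)) (\<lambda>_. 0)"
      by (simp add: proper_colouring_def)
    then show ?thesis
      by (rule exI[of _ "\<lambda>_. 0"])
  next
    case (2 v)
    then obtain c where c: "proper_colouring (W - {v}) E (f (\<omega> W)) c"
      using IH_mono by blast
    obtain c' where "proper_colouring W E (f (\<omega> W)) c'"
      using colouring_extend_low_degree[OF less.prems 2(1) c 2(2)] .
    then show ?thesis
      by blast
  next
    case 3
    then obtain A where A: "A \<subseteq> W" "A \<noteq> {}" "A \<noteq> W" "\<forall>x\<in>A. \<forall>y\<in>W - A. \<not> E x y"
      unfolding proper_cut_def by blast
    then have "A \<subset> W" "W - A \<subset> W"
      by auto
    then obtain ca cb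
      where "proper_colouring A E (f (\<omega> W)) ca" "proper_colouring (W - A) E (f (\<omega> W)) cb"
      using IH_mono by meson
    from colouring_anticomplete_union[OF less.prems A(4) this]
    show ?thesis
      by blast
  next
    case 4
    then obtain A where A: "A \<subseteq> W" "A \<noteq> {}" "A \<noteq> W" "\<forall>x\<in>A. \<forall>y\<in>W - A. E x y"
      unfolding proper_cut_def by blast
    then have "A \<subset> W" "W - A \<subset> W"
      by auto
    then obtain ca cb where "proper_colouring A E (f (\<omega> A)) ca"
      and "proper_colouring (W - A) E (f (\<omega> (W - A))) cb"
      using IH by meson
    from proper_colouring_shifted_union[OF this]
    have "proper_colouring W E (f (\<omega> A) + f (\<omega> (W - A)))
        (\<lambda>x. if x \<in> A then ca x else f (\<omega> A) + cb x)"
      using A(1) by (simp add: Un_absorb1)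
    moreover have "f (\<omega> A) + f (\<omega> (W - A)) \<le> f (\<omega> W)"
      using superadditive
        superadditive_mono[OF superadditive clique_number_join[OF less.prems A(1,4)]]
      by (rule order_trans)
    ultimately show ?thesis
      by (blast intro: proper_colouring_mono)
  qed
qed

lemma maximum_dominated_independent_set:
  assumes "W \<subseteq> V" "v0 \<in> W" "(\<omega> W)\<^sup>2 \<le> card (nbhd W v0)"
  obtains S v where "S \<subseteq> W" "finite S" "3 \<le> card S" "\<forall>s\<in>S. \<forall>t\<in>S. \<not> E s t"
    and "v \<in> W" "\<forall>s\<in>S. E v s"
    and "\<And>x c. x \<in> W - S \<Longrightarrow> \<forall>s\<in>S. \<not> E x s \<Longrightarrow> c \<in> W \<Longrightarrow> \<forall>s\<in>S. E c s \<Longrightarrow> \<not> E c x"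
proof -
  define dominated where
    "dominated S \<longleftrightarrow> S \<subseteq> W \<and> (\<forall>s\<in>S. \<forall>t\<in>S. \<not> E s t) \<and> (\<exists>v\<in>W. \<forall>s\<in>S. E v s)" for S
  have finW: "finite W"
    using assms(1) by (rule finite_subset_V)
  obtain x y z where xyz: "{x, y, z} \<subseteq> nbhd W v0" "x \<noteq> y" "y \<noteq> z" "x \<noteq> z"
    "\<not> E x y" "\<not> E y z" "\<not> E x z"
    using independent_triple_in_dense_nbhd[OF assms] .
  have "dominated {x, y, z}"
    unfolding dominated_def
    using xyz assms(1,2) adj_irrefl adj_sym[of x y] adj_sym[of y z] adj_sym[of x z]
    by (auto simp: nbhd_def subset_iff)
  moreover have "card S < Suc (card W)" if "dominated S" for S
    using that finW card_mono by (fastforce simp: dominated_def)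
  ultimately obtain S where S: "dominated S" and max: "\<And>S'. dominated S' \<Longrightarrow> card S' \<le> card S"
    using ex_has_greatest_nat[of dominated "{x, y, z}" card "Suc (card W)"] by blast
  have finS: "finite S"
    using S finW by (auto simp: dominated_def intro: finite_subset)
  have "card {x, y, z} = 3"
    using xyz by simp
  then have "3 \<le> card S"
    using max[OF \<open>dominated {x, y, z}\<close>] by simp
  moreover have "\<not> E c x" if x: "x \<in> W - S" "\<forall>s\<in>S. \<not> E x s" and c: "c \<in> W" "\<forall>s\<in>S. E c s" for x c
  proof
    assume "E c x"
    then have "dominated (insert x S)"
      using S x c assms(1) adj_sym adj_irrefl by (auto simp: dominated_def subset_iff)
    then show False
      using max finS x(1) by fastforce
  qed
  ultimately show ?thesis
    using that finS S by (auto simp: dominated_def)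
qed

end

locale fork_banner_free = sgraph +
  assumes fork_free: "H_free small_vertices fork_edges V E"
    and banner_free: "H_free small_vertices banner_edges V E"
begin

lemma no_induced_fork:
  assumes "distinct [a0, a1, a2, a3, a4]" "{a0, a1, a2, a3, a4} \<subseteq> V"
    and "E a0 a1" "E a0 a2" "E a0 a4" "E a4 a3"
    and "\<not> E a0 a3" "\<not> E a1 a2" "\<not> E a1 a3" "\<not> E a1 a4" "\<not> E a2 a3" "\<not> E a2 a4"
  shows False
proof -
  have "induced_subgraph_iso small_vertices fork_edges V E"
    by (rule five_vertex_induced_subgraph[of "[a0, a1, a2, a3, a4]"])
      (use assms adj_irrefl adj_sym[of a0 a1] adj_sym[of a0 a2] adj_sym[of a0 a3] adj_sym[of a0 a4]
        adj_sym[of a1 a2] adj_sym[of a1 a3] adj_sym[of a1 a4] adj_sym[of a2 a3] adj_sym[of a2 a4]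
        adj_sym[of a3 a4]
        in \<open>auto simp: small_vertices_eq fork_edges_def doubleton_eq_iff\<close>)
  then show False
    using fork_free by (simp add: H_free_def)
qed

lemma no_induced_banner:
  assumes "distinct [a0, a1, a2, a3, a4]" "{a0, a1, a2, a3, a4} \<subseteq> V"
    and "E a0 a1" "E a1 a2" "E a2 a3" "E a3 a0" "E a0 a4"
    and "\<not> E a0 a2" "\<not> E a1 a3" "\<not> E a1 a4" "\<not> E a2 a4" "\<not> E a3 a4"
  shows False
proof -
  have "induced_subgraph_iso small_vertices banner_edges V E"
    by (rule five_vertex_induced_subgraph[of "[a0, a1, a2, a3, a4]"])
      (use assms adj_irrefl adj_sym[of a0 a1] adj_sym[of a0 a2] adj_sym[of a0 a3] adj_sym[of a0 a4]
        adj_sym[of a1 a2] adj_sym[of a1 a3] adj_sym[of a1 a4] adj_sym[of a2 a3] adj_sym[of a2 a4]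
        adj_sym[of a3 a4]
        in \<open>auto simp: small_vertices_eq banner_edges_def doubleton_eq_iff\<close>)
  then show False
    using banner_free by (simp add: H_free_def)
qed

lemma partial_neighbour_adj_common_neighbour:
  assumes S: "S \<subseteq> V" "finite S" "3 \<le> card S" "\<forall>s\<in>S. \<forall>t\<in>S. \<not> E s t"
    and c: "c \<in> V" "\<forall>s\<in>S. E c s"
    and y: "y \<in> V" "y \<notin> S" "sa \<in> S" "E y sa" "sb \<in> S" "\<not> E y sb"
  shows "E y c"
proof (rule ccontr)
  assume yc: "\<not> E y c"
  obtain sd where sd: "sd \<in> S" "sd \<noteq> sa" "sd \<noteq> sb"
    using card_ge_3_avoid_two[OF S(2,3)] by blast
  have "c \<notin> S" "c \<noteq> y" "sa \<noteq> sb"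
    using S(1) c y adj_irrefl by auto
  then have distinct: "distinct [c, sa, y, sd, sb]" "distinct [c, sb, sd, y, sa]"
    using y sd by auto
  have V: "{c, sa, y, sd, sb} \<subseteq> V"
    using S(1) c(1) y(1,3,5) sd(1) by auto
  show False
  proof (cases "E y sd")
    case True
    show False
      by (rule no_induced_banner[OF distinct(1)]) (use V S(4) c y sd True yc adj_sym in auto)
  next
    case False
    show False
      by (rule no_induced_fork[OF distinct(2)]) (use V S(4) c y sd False yc adj_sym in auto)
  qed
qed

lemma common_neighbour_adj_outside:
  assumes W: "W \<subseteq> V"
    and S: "S \<subseteq> W" "finite S" "3 \<le> card S" "\<forall>s\<in>S. \<forall>t\<in>S. \<not> E s t"
    and dominating: "\<And>y. y \<in> W \<Longrightarrow> \<forall>s\<in>S. \<not> E y s \<Longrightarrow> y \<in> S"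
    and x: "x \<in> W" "\<forall>s\<in>S. E x s"
    and y: "y \<in> W" "\<not> (\<forall>s\<in>S. E y s)"
  shows "E x y"
proof (cases "y \<in> S")
  case False
  then obtain sa sb where sa: "sa \<in> S" "E y sa" and sb: "sb \<in> S" "\<not> E y sb"
    using dominating y by blast
  have "E y x"
    using partial_neighbour_adj_common_neighbour[OF _ S(2-4) _ x(2) _ False sa sb] S(1) W x(1) y(1)
    by blast
  then show ?thesis
    using adj_sym x(1) y(1) W by blast
qed (use x in blast)

lemma misses_at_most_one:
  assumes S: "S \<subseteq> V" "\<forall>s\<in>S. \<forall>t\<in>S. \<not> E s t"
    and v: "v \<in> V" "\<forall>s\<in>S. E v s"
    and r: "r \<in> V" "\<forall>s\<in>S. \<not> E r s" "\<not> E v r"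
    and p: "p \<in> V" "E v p" "E p r"
    and s: "s \<in> S" "s' \<in> S" "\<not> E p s" "\<not> E p s'"
  shows "s = s'"
proof (rule ccontr)
  assume "s \<noteq> s'"
  moreover have "v \<notin> S" "p \<notin> S" "r \<notin> S" "v \<noteq> p" "v \<noteq> r" "p \<noteq> r"
    using S(1) v r p s(1) adj_irrefl adj_sym by auto
  ultimately have "distinct [v, s, s', r, p]"
    using s by auto
  then show False
    by (rule no_induced_fork) (use S v r p s adj_sym in auto)
qed

lemma adjacent_to_all_but_one:
  assumes S: "S \<subseteq> V" "S \<noteq> {}" "\<forall>s\<in>S. \<forall>t\<in>S. \<not> E s t"
    and v: "v \<in> V" "\<forall>s\<in>S. E v s"
    and r: "r \<in> V" "\<forall>s\<in>S. \<not> E r s" "\<not> E v r"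
    and p: "p \<in> V" "E v p" "E p r"
  obtains s0 where "s0 \<in> S" "\<And>t. t \<in> S \<Longrightarrow> t \<noteq> s0 \<Longrightarrow> E p t"
proof (cases "\<exists>s0\<in>S. \<not> E p s0")
  case True
  then obtain s0 where "s0 \<in> S" "\<not> E p s0"
    by blast
  then show ?thesis
    using that misses_at_most_one[OF S(1,3) v r p] by blast
qed (use S(2) that in blast)

lemma partial_neighbours_adjacent:
  assumes S: "S \<subseteq> V" "finite S" "3 \<le> card S" "\<forall>s\<in>S. \<forall>t\<in>S. \<not> E s t"
    and v: "v \<in> V" "\<forall>s\<in>S. E v s"
    and r: "r \<in> V" "\<forall>s\<in>S. \<not> E r s" "\<not> E v r"
    and p: "p \<in> V" "E v p" "E p r" "s \<in> S" "\<not> E p s"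
    and p': "p' \<in> V" "E v p'" "E p' r" "s' \<in> S" "\<not> E p' s'"
    and "p \<noteq> p'"
  shows "E p p'"
proof (rule ccontr)
  assume pp': "\<not> E p p'"
  have adj_p: "E p t" if "t \<in> S" "t \<noteq> s" for t
    using that misses_at_most_one[OF S(1,4) v r p(1-3) p(4) that(1) p(5)] by blast
  have adj_p': "E p' t" if "t \<in> S" "t \<noteq> s'" for t
    using that misses_at_most_one[OF S(1,4) v r p'(1-3) p'(4) that(1) p'(5)] by blast
  have outside: "v \<notin> S" "r \<notin> S" "p \<notin> S" "p' \<notin> S"
      "v \<noteq> p" "v \<noteq> p'" "v \<noteq> r" "p \<noteq> r" "p' \<noteq> r"
    using S(1) v r p p' adj_irrefl adj_sym by auto
  show False
  proof (cases "s = s'")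
    case True
    have "distinct [v, p, r, p', s]"
      using outside p(4) \<open>p \<noteq> p'\<close> by auto
    then show False
      by (rule no_induced_banner) (use S v r p p' pp' True adj_sym in auto)
  next
    case False
    obtain t where t: "t \<in> S" "t \<noteq> s" "t \<noteq> s'"
      using card_ge_3_avoid_two[OF S(2,3)] by blast
    have "distinct [p', r, p, t, s]"
      using outside p(4) t \<open>p \<noteq> p'\<close> by auto
    then show False
      by (rule no_induced_banner)
        (use S v r p p' pp' t False adj_p[OF t(1,2)] adj_p'[OF t(1,3)] adj_p'[OF p(4)] adj_sym
          in auto)
  qed
qed

lemma partial_neighbour_adj_anticomplete_neighbour:
  assumes S: "S \<subseteq> V" "finite S" "3 \<le> card S" "\<forall>s\<in>S. \<forall>t\<in>S. \<not> E s t"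
    and v: "v \<in> V" "\<forall>s\<in>S. E v s"
    and r: "r \<in> V" "\<forall>s\<in>S. \<not> E r s" "\<not> E v r"
    and p: "p \<in> V" "E v p" "E p r"
    and q: "q \<in> V" "\<forall>s\<in>S. \<not> E q s" "E r q"
  shows "E p q"
proof (rule ccontr)
  assume pq: "\<not> E p q"
  have "S \<noteq> {}"
    using S(3) by auto
  then obtain s0 where s0: "s0 \<in> S" "\<And>t. t \<in> S \<Longrightarrow> t \<noteq> s0 \<Longrightarrow> E p t"
    using adjacent_to_all_but_one[OF S(1) _ S(4) v r p] by blast
  obtain s1 where s1: "s1 \<in> S" "s1 \<noteq> s0"
    using card_ge_3_avoid_two[OF S(2,3)] by blast
  obtain s2 where s2: "s2 \<in> S" "s2 \<noteq> s0" "s2 \<noteq> s1"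
    using card_ge_3_avoid_two[OF S(2,3)] by blast
  have "p \<notin> S" "q \<notin> S" "r \<notin> S" "p \<noteq> q" "p \<noteq> r" "q \<noteq> r"
    using S(1) v r p q s1 s0(2) adj_irrefl adj_sym by auto
  then have "distinct [p, s1, s2, q, r]"
    using s1 s2 by auto
  then show False
    by (rule no_induced_fork) (use S r p q pq s1 s2 s0(2) adj_sym in auto)
qed

lemma anticomplete_neighbours_adjacent:
  assumes S: "S \<subseteq> V" "\<forall>s\<in>S. \<forall>t\<in>S. \<not> E s t"
    and v: "v \<in> V" "\<forall>s\<in>S. E v s"
    and p: "p \<in> V" "E v p" "s \<in> S" "\<not> E p s"
    and q: "q \<in> V" "\<forall>s\<in>S. \<not> E q s" "\<not> E v q" "E p q"
    and q': "q' \<in> V" "\<forall>s\<in>S. \<not> E q' s" "\<not> E v q'" "E p q'"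
    and "q \<noteq> q'"
  shows "E q q'"
proof (rule ccontr)
  assume qq': "\<not> E q q'"
  have "v \<notin> S" "p \<notin> S" "p \<noteq> v" "p \<noteq> q" "p \<noteq> q'" "q \<noteq> v" "q' \<noteq> v" "q \<notin> S" "q' \<notin> S"
    using S(1) v p q q' adj_irrefl adj_sym by auto
  then have "distinct [p, q, q', s, v]"
    using p(3) \<open>q \<noteq> q'\<close> by auto
  then show False
    by (rule no_induced_fork) (use v p q q' qq' adj_sym S(1) in auto)
qed

lemma nbhd_of_anticomplete_vertex_is_clique:
  assumes W: "W \<subseteq> V"
    and S: "S \<subseteq> W" "finite S" "3 \<le> card S" "\<forall>s\<in>S. \<forall>t\<in>S. \<not> E s t"
    and v: "v \<in> W" "\<forall>s\<in>S. E v s"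
    and r: "r \<in> W - S" "\<forall>s\<in>S. \<not> E r s"
    and maximal: "\<And>x c. x \<in> W - S \<Longrightarrow> \<forall>s\<in>S. \<not> E x s \<Longrightarrow> c \<in> W \<Longrightarrow> \<forall>s\<in>S. E c s \<Longrightarrow> \<not> E c x"
    and p0: "p0 \<in> nbhd W r" "\<exists>s\<in>S. E p0 s"
  shows "is_clique W E (insert r (nbhd W r))"
proof -
  have SV: "S \<subseteq> V" and vV: "v \<in> V" and rV: "r \<in> V"
    using W S(1) v(1) r(1) by auto
  have vr: "\<not> E v r"
    using maximal[OF r v] .
  have nbr: "x \<in> V" "x \<in> W - S" "E x r" "E r x" if "x \<in> nbhd W r" for x
    using that W r adj_sym[of x r] by (auto simp: nbhd_def)
  have partial: "E v x \<and> (\<exists>s\<in>S. \<not> E x s)" if x: "x \<in> nbhd W r" "\<exists>s\<in>S. E x s" for x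
  proof -
    have "\<not> (\<forall>s\<in>S. E x s)"
      using maximal[OF r] nbr[OF x(1)] by blast
    then obtain sb where sb: "sb \<in> S" "\<not> E x sb"
      by blast
    obtain sa where sa: "sa \<in> S" "E x sa"
      using x(2) by blast
    have "E x v"
      using partial_neighbour_adj_common_neighbour[OF SV S(2-4) vV v(2) nbr(1)[OF x(1)] _ sa sb]
        nbr(2)[OF x(1)] by blast
    then show ?thesis
      using sb adj_sym[OF nbr(1)[OF x(1)] vV] by blast
  qed
  have anticomplete: "\<not> E v x" if "x \<in> nbhd W r" "\<forall>s\<in>S. \<not> E x s" for x
    using maximal[OF nbr(2)[OF that(1)] that(2) v] .
  have partial_anticomplete: "E p q"
    if p: "p \<in> nbhd W r" "\<exists>s\<in>S. E p s" and q: "q \<in> nbhd W r" "\<forall>s\<in>S. \<not> E q s" for p q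
    using partial_neighbour_adj_anticomplete_neighbour[OF SV S(2-4) vV v(2) rV r(2) vr
        nbr(1)[OF p(1)] _ nbr(3)[OF p(1)] nbr(1)[OF q(1)] q(2) nbr(4)[OF q(1)]]
      partial[OF p] by blast
  obtain s0 where s0: "s0 \<in> S" "\<not> E p0 s0"
    using partial[OF p0] by blast
  have adj: "E x y" if x: "x \<in> nbhd W r" and y: "y \<in> nbhd W r" and "x \<noteq> y" for x y
  proof (cases "\<exists>s\<in>S. E x s"; cases "\<exists>s\<in>S. E y s")
    assume hx: "\<exists>s\<in>S. E x s" and hy: "\<exists>s\<in>S. E y s"
    obtain s where "s \<in> S" "\<not> E x s"
      using partial[OF x hx] by blast
    moreover obtain s' where "s' \<in> S" "\<not> E y s'"
      using partial[OF y hy] by blast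
    ultimately show ?thesis
      using partial_neighbours_adjacent[OF SV S(2-4) vV v(2) rV r(2) vr
          nbr(1)[OF x] _ nbr(3)[OF x] _ _ nbr(1)[OF y] _ nbr(3)[OF y] _ _ \<open>x \<noteq> y\<close>]
        partial[OF x hx] partial[OF y hy] by blast
  next
    assume "\<exists>s\<in>S. E x s" "\<not> (\<exists>s\<in>S. E y s)"
    then show ?thesis
      using partial_anticomplete[OF x _ y] by blast
  next
    assume "\<not> (\<exists>s\<in>S. E x s)" "\<exists>s\<in>S. E y s"
    then have "E y x"
      using partial_anticomplete[OF y _ x] by blast
    then show ?thesis
      using adj_sym[OF nbr(1)[OF x] nbr(1)[OF y]] by blast
  next
    assume "\<not> (\<exists>s\<in>S. E x s)" "\<not> (\<exists>s\<in>S. E y s)"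
    then have "\<forall>s\<in>S. \<not> E x s" "\<forall>s\<in>S. \<not> E y s"
      by blast+
    then show ?thesis
      using anticomplete_neighbours_adjacent[OF SV S(4) vV v(2) nbr(1)[OF p0(1)] _ s0
          nbr(1)[OF x] _ _ _ nbr(1)[OF y] _ _ _ \<open>x \<noteq> y\<close>]
        partial[OF p0] partial_anticomplete[OF p0 x] partial_anticomplete[OF p0 y]
        anticomplete[OF x] anticomplete[OF y] by blast
  qed
  show ?thesis
    unfolding is_clique_def
  proof (intro conjI ballI impI)
    show "insert r (nbhd W r) \<subseteq> W"
      using r(1) by (auto simp: nbhd_def)
    fix x y assume "x \<in> insert r (nbhd W r)" "y \<in> insert r (nbhd W r)" "x \<noteq> y"
    then show "E x y"
      using adj nbr(3,4) by blast
  qed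
qed

lemma no_dense_prime_induced_subgraph:
  assumes W: "W \<subseteq> V" "W \<noteq> {}"
    and dense: "\<forall>v\<in>W. (\<omega> W)\<^sup>2 \<le> card (nbhd W v)"
    and connected: "\<not> proper_cut W (\<lambda>x y. \<not> E x y)"
    and co_connected: "\<not> proper_cut W E"
  shows False
proof -
  obtain v0 where v0: "v0 \<in> W"
    using W(2) by blast
  then have "(\<omega> W)\<^sup>2 \<le> card (nbhd W v0)"
    using dense by blast
  then obtain S v where S: "S \<subseteq> W" "finite S" "3 \<le> card S" "\<forall>s\<in>S. \<forall>t\<in>S. \<not> E s t"
    and v: "v \<in> W" "\<forall>s\<in>S. E v s"
    and maximal: "\<And>x c. x \<in> W - S \<Longrightarrow> \<forall>s\<in>S. \<not> E x s \<Longrightarrow> c \<in> W \<Longrightarrow> \<forall>s\<in>S. E c s \<Longrightarrow> \<not> E c x"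
    using maximum_dominated_independent_set[OF W(1) v0] by blast
  have "S \<noteq> {}"
    using S(3) by auto
  define R where "R = {x \<in> W - S. \<forall>s\<in>S. \<not> E x s}"
  show False
  proof (cases "R = {}")
    case True
    define C where "C = {c \<in> W. \<forall>s\<in>S. E c s}"
    have "\<forall>s\<in>S. \<not> E y s \<Longrightarrow> y \<in> S" if "y \<in> W" for y
      using True that by (auto simp: R_def)
    then have "\<forall>x\<in>C. \<forall>y\<in>W - C. E x y"
      using common_neighbour_adj_outside[OF W(1) S] by (auto simp: C_def)
    moreover have "v \<in> C" "S \<inter> C = {}"
      using v S(1,4) by (auto simp: C_def)
    ultimately have "proper_cut W E"
      unfolding proper_cut_def using \<open>S \<noteq> {}\<close> S(1) by (intro exI[of _ C]) (auto simp: C_def)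
    then show False
      using co_connected by blast
  next
    case False
    have "R \<subseteq> W" "R \<noteq> W"
      using v \<open>S \<noteq> {}\<close> by (auto simp: R_def)
    then have "\<exists>r\<in>R. \<exists>p0\<in>W - R. E r p0"
      using connected False unfolding proper_cut_def by blast
    then obtain r p0 where r: "r \<in> W - S" "\<forall>s\<in>S. \<not> E r s" and p0: "p0 \<in> W - R" "E r p0"
      unfolding R_def by blast
    have "p0 \<notin> S"
      using r(2) p0(2) by blast
    then have "p0 \<in> nbhd W r" "\<exists>s\<in>S. E p0 s"
      using p0 by (auto simp: R_def nbhd_def)
    from nbhd_of_anticomplete_vertex_is_clique[OF W(1) S v r maximal this]
    have "card (insert r (nbhd W r)) \<le> \<omega> W"
      using card_clique_le_clique_number finite_subset_V[OF W(1)] by blast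
    moreover have "finite (nbhd W r)" "r \<notin> nbhd W r"
      using finite_subset_V[OF W(1)] adj_irrefl r(1) W(1) by (auto simp: nbhd_def)
    ultimately have "card (nbhd W r) < \<omega> W"
      by simp
    moreover have "\<omega> W \<le> (\<omega> W)\<^sup>2"
      by (simp add: power2_eq_square)
    moreover have "(\<omega> W)\<^sup>2 \<le> card (nbhd W r)"
      using dense r(1) by blast
    ultimately show False
      by linarith
  qed
qed

end

theorem corollary3p15:
  fixes V :: "'a set" and E :: "'a \<Rightarrow> 'a \<Rightarrow> bool"
  assumes "simple_graph V E"
    and "H_free small_vertices fork_edges V E"
    and "H_free small_vertices banner_edges V E"
  shows "chromatic_number V E \<le> (clique_number V E)^2"
proof -
  interpret fork_banner_free V E
    using assms unfolding simple_graph_def by unfold_locales auto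
  have "\<exists>c. proper_colouring V E ((clique_number V E)^2) c"
    by (rule colouring_from_superadditive_bound[OF _ no_dense_prime_induced_subgraph])
      (auto simp: power2_sum)
  then show ?thesis
    by (auto intro: chromatic_number_le)
qed

end
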